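(* Let $(\Omega,\Sigma,\mu)$ be a finite measure space and let $X(\mu)$ be a strictly rectangular function space. For every $f\in L^0(\mu)$, the norm of $X(\mu)$ is strictly monotone on $S(f,X(\mu))$ (i.e. $\|g\|\le\|h\|$ whenever $g,h\in S(f,X(\mu))$ and $0\le g\le h$), and $$\||g|-|h|\|\le 4\|g-h\|\quad\text{for all } g,h\in S(f,X(\mu)).$$ If moreover $f\in X(\mu)$, then for all $s\in S(\Sigma)$ and $g\in S(f,X(\mu))$, $$\||sg|\|\le\|s\|_\infty\||g|\|,\qquad \|sg\|\le 4\|s\|_\infty\|g\|.$$
   Context: $L^0(\mu)$ is the space of equivalence classes (modulo $\mu$-a.e. equality) of real $\Sigma$-measurable functions, ordered $\mu$-a.e. A strictly rectangular function space is a vector subspace $X(\mu)\subseteq L^0(\mu)$ with a norm such that $\chi_Ah\in X(\mu)$ and $\|\chi_Ah\|\le\|h\|$ for all $h\in X(\mu)$, $A\in\Sigma$. $S(\Sigma)$ is the space of real $\Sigma$-simple functions, $\|\cdot\|_\infty$ the $L^\infty(\mu)$ norm. For $f\in L^0(\mu)$: $\Sigma_f=\{A\in\Sigma: f\chi_A\in X(\mu)\}$, $S(f,X(\mu))=\operatorname{span}\{f\chi_A:A\in\Sigma_f\}$. *)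

theory Defs
  imports "HOL-Analysis.Analysis" "HOL-Probability.Essential_Supremum"
begin

text \<open>Elements of L0(M) are represented by Borel measurable real functions; the
  function space X is a set of such functions closed under a.e. equality, and the
  norm N is invariant under a.e. equality (so it is really a norm on classes).\<close>

definition strictly_rectangular_fs ::
  "'a measure \<Rightarrow> ('a \<Rightarrow> real) set \<Rightarrow> (('a \<Rightarrow> real) \<Rightarrow> real) \<Rightarrow> bool" where
  "strictly_rectangular_fs M X N \<longleftrightarrow>
     X \<subseteq> borel_measurable M \<and>
     (\<forall>f\<in>X. \<forall>g\<in>borel_measurable M. (AE x in M. f x = g x) \<longrightarrow> g \<in> X \<and> N g = N f) \<and>
     (\<lambda>x. 0) \<in> X \<and>
     (\<forall>f\<in>X. \<forall>g\<in>X. (\<lambda>x. f x + g x) \<in> X) \<and>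
     (\<forall>f\<in>X. \<forall>c::real. (\<lambda>x. c * f x) \<in> X) \<and>
     (\<forall>f\<in>X. 0 \<le> N f) \<and>
     (\<forall>f\<in>X. N f = 0 \<longleftrightarrow> (AE x in M. f x = 0)) \<and>
     (\<forall>f\<in>X. \<forall>c::real. N (\<lambda>x. c * f x) = \<bar>c\<bar> * N f) \<and>
     (\<forall>f\<in>X. \<forall>g\<in>X. N (\<lambda>x. f x + g x) \<le> N f + N g) \<and>
     (\<forall>h\<in>X. \<forall>A\<in>sets M. (\<lambda>x. indicator A x * h x) \<in> X \<and>
                         N (\<lambda>x. indicator A x * h x) \<le> N h)"

definition Sigma_f :: "'a measure \<Rightarrow> ('a \<Rightarrow> real) set \<Rightarrow> ('a \<Rightarrow> real) \<Rightarrow> 'a set set" where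
  "Sigma_f M X f = {A \<in> sets M. (\<lambda>x. f x * indicator A x) \<in> X}"

definition S_fX :: "'a measure \<Rightarrow> ('a \<Rightarrow> real) set \<Rightarrow> ('a \<Rightarrow> real) \<Rightarrow> ('a \<Rightarrow> real) set" where
  "S_fX M X f = {g \<in> borel_measurable M. \<exists>(n::nat) (c::nat \<Rightarrow> real) (A::nat \<Rightarrow> 'a set).
      (\<forall>i<n. A i \<in> Sigma_f M X f) \<and>
      (AE x in M. g x = (\<Sum>i<n. c i * (f x * indicator (A i) x)))}"

definition Linf_norm :: "'a measure \<Rightarrow> ('a \<Rightarrow> real) \<Rightarrow> real" where
  "Linf_norm M s = real_of_ereal (esssup M (\<lambda>x. ereal \<bar>s x\<bar>))"

end

theory Submission
  imports Defs
begin

text \<open>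
  Everything rests on one estimate: if \<open>h \<in> X\<close> and \<open>s\<close> is simple with \<open>0 \<le> s \<le> c\<close>, then
  \<open>N (s h) \<le> c N h\<close>. With \<open>m\<close> the smallest positive value of \<open>s\<close> and \<open>C = {s > 0}\<close>, we have
  \<open>s h = m \<chi>\<^sub>C h + s' h\<close> where \<open>0 \<le> s' \<le> c - m\<close> takes fewer positive values, and
  rectangularity bounds the first summand by \<open>m N h\<close>; induction finishes. Splitting a signed
  multiplier into positive and negative parts gives \<open>N (s h) \<le> 2 c N h\<close> whenever \<open>|s| \<le> c\<close> a.e.

  Every element of \<open>S(f,X)\<close> is \<open>\<phi> f\<close> with \<open>\<phi>\<close> simple. Hence for \<open>g = \<phi> f\<close> and \<open>h = \<psi> f\<close> the
  quotients \<open>g / h\<close> (when \<open>0 \<le> g \<le> h\<close>) and \<open>(|g| - |h|) / (g - h)\<close> can be computed from \<open>\<phi>\<close>,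
  \<open>\<psi>\<close> and \<open>sgn f\<close>, so they are simple multipliers bounded by 1. This yields monotonicity and
  the second estimate even with constant 2; the estimates for \<open>s g\<close> use \<open>|s| \<le> \<parallel>s\<parallel>\<^sub>\<infinity>\<close> a.e.
\<close>

lemma S_fX_obtain_simple_multiplier:
  assumes "g \<in> S_fX M X f"
  obtains \<phi> where "simple_function M \<phi>" and "AE x in M. g x = \<phi> x * f x"
proof -
  obtain n :: nat and c A where A: "\<forall>i<n. A i \<in> Sigma_f M X f"
    and g: "AE x in M. g x = (\<Sum>i<n. c i * (f x * indicator (A i) x))"
    using assms unfolding S_fX_def by blast
  have "simple_function M (\<lambda>x. \<Sum>i<n. c i * indicator (A i) x)"
    using A unfolding Sigma_f_def by (intro simple_function_sum simple_function_mult) auto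
  moreover have "AE x in M. g x = (\<Sum>i<n. c i * indicator (A i) x) * f x"
    using g by (simp only: sum_distrib_left mult.commute mult.left_commute)
  ultimately show thesis using that by blast
qed

lemma AE_abs_le_Linf_norm:
  fixes s :: "'a \<Rightarrow> real"
  assumes "simple_function M s"
  shows "AE x in M. \<bar>s x\<bar> \<le> Linf_norm M s"
proof -
  let ?e = "esssup M (\<lambda>x. ereal \<bar>s x\<bar>)"
  define B where "B = Max (abs ` s ` space M)"
  have "\<And>x. x \<in> space M \<Longrightarrow> \<bar>s x\<bar> \<le> B"
    using simple_functionD(1)[OF assms] unfolding B_def by auto
  then have "?e \<le> ereal B"
    using borel_measurable_simple_function[OF assms] by (intro esssup_I) auto
  then have "\<And>a. ereal a \<le> ?e \<Longrightarrow> a \<le> real_of_ereal ?e"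
    by (cases ?e) auto
  with esssup_AE[of "\<lambda>x. ereal \<bar>s x\<bar>" M] show ?thesis
    unfolding Linf_norm_def by (auto elim: eventually_mono)
qed

lemma Linf_norm_nonneg: "0 \<le> Linf_norm M s"
proof (cases "emeasure M (space M) = 0")
  case False
  then have "0 \<le> esssup M (\<lambda>x. ereal \<bar>s x\<bar>)"
    using esssup_mono[of "\<lambda>x. 0" M "\<lambda>x. ereal \<bar>s x\<bar>"] esssup_const[of M 0]
    by (metis abs_ge_zero borel_measurable_const ereal_less_eq(5))
  then show ?thesis unfolding Linf_norm_def by (simp add: real_of_ereal_pos)
next
  case True
  then show ?thesis
    by (cases "(\<lambda>x. ereal \<bar>s x\<bar>) \<in> borel_measurable M")
      (simp_all add: Linf_norm_def esssup_zero_space esssup_non_measurable top_ereal_def)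
qed

lemma simple_function_sgn:
  fixes g :: "'a \<Rightarrow> real"
  assumes "g \<in> borel_measurable M"
  shows "simple_function M (\<lambda>x. sgn (g x))"
proof (rule simple_function_borel_measurable)
  show "(\<lambda>x. sgn (g x)) \<in> borel_measurable M" using assms by measurable
  have "(\<lambda>x. sgn (g x)) ` space M \<subseteq> {-1, 0, 1}" by (auto simp: sgn_real_def)
  then show "finite ((\<lambda>x. sgn (g x)) ` space M)" by (rule finite_subset) simp
qed

lemma card_pos_values_shift_less:
  fixes s :: "'a \<Rightarrow> real"
  assumes "finite (s ` A)" and "m \<in> s ` A" "0 < m" and "\<And>v. v \<in> s ` A \<Longrightarrow> 0 < v \<Longrightarrow> m \<le> v"
  shows "card {v \<in> (\<lambda>x. if 0 < s x then s x - m else 0) ` A. 0 < v} < card {v \<in> s ` A. 0 < v}"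
proof -
  let ?P = "{v \<in> s ` A. 0 < v}"
  have "finite ?P" using assms(1) by simp
  have "{v \<in> (\<lambda>x. if 0 < s x then s x - m else 0) ` A. 0 < v} \<subseteq> (\<lambda>v. v - m) ` (?P - {m})"
    by (auto simp: image_iff split: if_splits)
  then have "card {v \<in> (\<lambda>x. if 0 < s x then s x - m else 0) ` A. 0 < v} \<le> card (?P - {m})"
    using \<open>finite ?P\<close> by (meson card_image_le card_mono finite_Diff finite_imageI order_trans)
  also have "\<dots> < card ?P" using \<open>finite ?P\<close> assms(2,3) by (intro card_Diff1_less) auto
  finally show ?thesis .
qed

lemma clamp_ratio_mult:
  fixes a b z :: real
  assumes "0 \<le> a * z" "a * z \<le> b * z"
  shows "max 0 (min 1 (a / b)) * (b * z) = a * z"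
proof (cases "b * z = 0")
  case True
  then show ?thesis using assms by auto
next
  case False
  then have "0 < b * z" using assms by linarith
  have r: "a / b = (a * z) / (b * z)" using False by simp
  have "0 \<le> a / b" using divide_nonneg_pos[OF assms(1) \<open>0 < b * z\<close>] by (simp only: r)
  moreover have "a / b \<le> 1" using assms(2) \<open>0 < b * z\<close> by (simp only: r divide_le_eq_1_pos)
  ultimately show ?thesis using False by simp
qed

lemma abs_diff_eq_ratio_mult:
  fixes a b z :: real
  shows "(\<bar>a\<bar> - \<bar>b\<bar>) * sgn z / (a - b) * (a * z - b * z) = \<bar>a * z\<bar> - \<bar>b * z\<bar>"
proof (cases "a = b")
  case False
  have "(\<bar>a\<bar> - \<bar>b\<bar>) * sgn z / (a - b) * (a * z - b * z) = (\<bar>a\<bar> - \<bar>b\<bar>) * (sgn z * z)"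
    using False by (simp add: left_diff_distrib[symmetric])
  also have "sgn z * z = \<bar>z\<bar>" by (simp add: abs_sgn mult.commute)
  finally show ?thesis by (simp add: abs_mult left_diff_distrib)
qed simp

lemma abs_ratio_le_1:
  fixes a b z :: real
  shows "\<bar>(\<bar>a\<bar> - \<bar>b\<bar>) * sgn z / (a - b)\<bar> \<le> 1"
proof -
  have "\<bar>(\<bar>a\<bar> - \<bar>b\<bar>) * sgn z\<bar> \<le> \<bar>a - b\<bar>"
    using abs_triangle_ineq3[of a b] by (simp add: abs_mult abs_sgn_eq)
  then show ?thesis by (simp add: abs_divide divide_le_eq_1)
qed

locale strictly_rectangular =
  fixes M :: "'a measure" and X :: "('a \<Rightarrow> real) set" and N :: "('a \<Rightarrow> real) \<Rightarrow> real"
  assumes strictly_rectangular_fs: "strictly_rectangular_fs M X N"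
begin

lemma mem_measurable: "f \<in> X \<Longrightarrow> f \<in> borel_measurable M"
  using strictly_rectangular_fs unfolding strictly_rectangular_fs_def by blast

lemma AE_cong:
  "f \<in> X \<Longrightarrow> g \<in> borel_measurable M \<Longrightarrow> AE x in M. f x = g x \<Longrightarrow> g \<in> X \<and> N g = N f"
  using strictly_rectangular_fs unfolding strictly_rectangular_fs_def by blast

lemma zero_mem: "(\<lambda>x. 0) \<in> X"
  using strictly_rectangular_fs unfolding strictly_rectangular_fs_def by blast

lemma add_mem: "f \<in> X \<Longrightarrow> g \<in> X \<Longrightarrow> (\<lambda>x. f x + g x) \<in> X"
  using strictly_rectangular_fs unfolding strictly_rectangular_fs_def by blast

lemma scale_mem: "f \<in> X \<Longrightarrow> (\<lambda>x. c * f x) \<in> X"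
  using strictly_rectangular_fs unfolding strictly_rectangular_fs_def by blast

lemma norm_nonneg: "f \<in> X \<Longrightarrow> 0 \<le> N f"
  using strictly_rectangular_fs unfolding strictly_rectangular_fs_def by blast

lemma norm_zero_iff: "f \<in> X \<Longrightarrow> N f = 0 \<longleftrightarrow> (AE x in M. f x = 0)"
  using strictly_rectangular_fs unfolding strictly_rectangular_fs_def by blast

lemma norm_scale: "f \<in> X \<Longrightarrow> N (\<lambda>x. c * f x) = \<bar>c\<bar> * N f"
  using strictly_rectangular_fs unfolding strictly_rectangular_fs_def by blast

lemma norm_triangle: "f \<in> X \<Longrightarrow> g \<in> X \<Longrightarrow> N (\<lambda>x. f x + g x) \<le> N f + N g"
  using strictly_rectangular_fs unfolding strictly_rectangular_fs_def by blast

lemma indicator_mult_mem: "h \<in> X \<Longrightarrow> A \<in> sets M \<Longrightarrow> (\<lambda>x. indicator A x * h x) \<in> X"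
  using strictly_rectangular_fs unfolding strictly_rectangular_fs_def by blast

lemma norm_indicator_mult_le: "h \<in> X \<Longrightarrow> A \<in> sets M \<Longrightarrow> N (\<lambda>x. indicator A x * h x) \<le> N h"
  using strictly_rectangular_fs unfolding strictly_rectangular_fs_def by blast

lemma diff_mem: "f \<in> X \<Longrightarrow> g \<in> X \<Longrightarrow> (\<lambda>x. f x - g x) \<in> X"
  using add_mem[OF _ scale_mem[of g "-1"]] by simp

lemma norm_diff_le: "f \<in> X \<Longrightarrow> g \<in> X \<Longrightarrow> N (\<lambda>x. f x - g x) \<le> N f + N g"
  using norm_triangle[OF _ scale_mem[of g "-1"]] norm_scale[of g "-1"] by simp

lemma AE_cong_le:
  assumes "f \<in> X" "N f \<le> b" "g \<in> borel_measurable M" "AE x in M. f x = g x"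
  shows "g \<in> X \<and> N g \<le> b"
  using AE_cong[OF assms(1,3,4)] assms(2) by simp

lemma mem_norm_AE_zero:
  assumes "g \<in> borel_measurable M" "AE x in M. g x = 0"
  shows "g \<in> X \<and> N g = 0"
proof -
  have "AE x in M. 0 = g x" using assms(2) by (auto elim: eventually_mono)
  then show ?thesis using AE_cong[OF zero_mem assms(1)] norm_zero_iff[OF zero_mem] by auto
qed

lemma mult_indicator_add_le:
  assumes h: "h \<in> X" and C: "C \<in> sets M" and "0 \<le> m" and u: "u \<in> X"
  shows "(\<lambda>x. m * (indicator C x * h x) + u x) \<in> X \<and>
    N (\<lambda>x. m * (indicator C x * h x) + u x) \<le> m * N h + N u"
proof -
  have Ch: "(\<lambda>x. indicator C x * h x) \<in> X" "N (\<lambda>x. indicator C x * h x) \<le> N h"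
    using indicator_mult_mem[OF h C] norm_indicator_mult_le[OF h C] by auto
  have "N (\<lambda>x. m * (indicator C x * h x) + u x) \<le> m * N (\<lambda>x. indicator C x * h x) + N u"
    using norm_triangle[OF scale_mem[OF Ch(1), of m] u] norm_scale[OF Ch(1), of m] \<open>0 \<le> m\<close>
    by simp
  also have "\<dots> \<le> m * N h + N u"
    using mult_left_mono[OF Ch(2) \<open>0 \<le> m\<close>] by simp
  finally show ?thesis using add_mem[OF scale_mem[OF Ch(1)] u] by simp
qed

lemma mult_simple_nonneg_le:
  assumes h: "h \<in> X" and "simple_function M s" and "0 \<le> c"
    and "\<And>x. x \<in> space M \<Longrightarrow> 0 \<le> s x \<and> s x \<le> c"
  shows "(\<lambda>x. s x * h x) \<in> X \<and> N (\<lambda>x. s x * h x) \<le> c * N h"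
  using assms(2-)
proof (induction "card {v \<in> s ` space M. 0 < v}" arbitrary: s c rule: less_induct)
  case less
  note s = \<open>simple_function M s\<close> and bound = less.prems(3)
  have sh: "(\<lambda>x. s x * h x) \<in> borel_measurable M"
    using borel_measurable_simple_function[OF s] mem_measurable[OF h] by simp
  define P where "P = {v \<in> s ` space M. 0 < v}"
  have "finite P" using simple_functionD(1)[OF s] unfolding P_def by simp
  show ?case
  proof (cases "P = {}")
    case True
    then have "AE x in M. s x * h x = 0" using bound by (force simp: P_def)
    with mem_norm_AE_zero[OF sh] show ?thesis using \<open>0 \<le> c\<close> norm_nonneg[OF h] by simp
  next
    case False
    define m where "m = Min P"
    have "m \<in> P" and m_le: "\<And>v. v \<in> P \<Longrightarrow> m \<le> v"
      using False \<open>finite P\<close> unfolding m_def by auto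
    then have "0 < m" and "m \<le> c" using bound unfolding P_def by auto
    define C where "C = {x \<in> space M. 0 < s x}"
    define s' where "s' x = (if 0 < s x then s x - m else 0)" for x
    have C: "C \<in> sets M"
      unfolding C_def using s by (simp add: borel_measurable_simple_function measurable_sets)
    have s': "simple_function M s'"
      unfolding s'_def by (rule simple_function_compose1[OF s])
    have "card {v \<in> s' ` space M. 0 < v} < card P"
      unfolding s'_def P_def using simple_functionD(1)[OF s] \<open>m \<in> P\<close> \<open>0 < m\<close> m_le
      by (intro card_pos_values_shift_less) (auto simp: P_def)
    then have IH: "(\<lambda>x. s' x * h x) \<in> X \<and> N (\<lambda>x. s' x * h x) \<le> (c - m) * N h"
      unfolding P_def using \<open>m \<le> c\<close> bound m_le
      by (intro less.hyps[OF _ s']) (auto simp: s'_def P_def)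
    have "AE x in M. m * (indicator C x * h x) + s' x * h x = s x * h x"
      by (rule AE_I2) (use bound in \<open>force simp: C_def s'_def algebra_simps\<close>)
    with mult_indicator_add_le[OF h C _ IH[THEN conjunct1]] \<open>0 < m\<close> IH
    have "(\<lambda>x. s x * h x) \<in> X \<and> N (\<lambda>x. s x * h x) \<le> m * N h + (c - m) * N h"
      using AE_cong_le[OF _ _ sh] by (meson add_left_mono less_imp_le order_trans)
    then show ?thesis by (simp add: algebra_simps)
  qed
qed

lemma mult_simple_nonneg_AE_le:
  assumes h: "h \<in> X" and s: "simple_function M s" and "0 \<le> c"
    and bound: "AE x in M. 0 \<le> s x \<and> s x \<le> c"
  shows "(\<lambda>x. s x * h x) \<in> X \<and> N (\<lambda>x. s x * h x) \<le> c * N h"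
proof -
  define t where "t x = max 0 (min c (s x))" for x
  have th: "(\<lambda>x. t x * h x) \<in> X \<and> N (\<lambda>x. t x * h x) \<le> c * N h"
    using h \<open>0 \<le> c\<close> unfolding t_def
    by (intro mult_simple_nonneg_le simple_function_compose1[OF s]) auto
  have "AE x in M. t x * h x = s x * h x"
    using bound by (auto simp: t_def elim: eventually_mono)
  from AE_cong_le[OF th[THEN conjunct1] th[THEN conjunct2] _ this] show ?thesis
    using borel_measurable_simple_function[OF s] mem_measurable[OF h] by simp
qed

lemma mult_simple_AE_le:
  assumes h: "h \<in> X" and s: "simple_function M s" and "0 \<le> c"
    and bound: "AE x in M. \<bar>s x\<bar> \<le> c"
  shows "(\<lambda>x. s x * h x) \<in> X \<and> N (\<lambda>x. s x * h x) \<le> 2 * c * N h"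
proof -
  have pos: "(\<lambda>x. max (s x) 0 * h x) \<in> X \<and> N (\<lambda>x. max (s x) 0 * h x) \<le> c * N h"
    using bound \<open>0 \<le> c\<close>
    by (intro mult_simple_nonneg_AE_le[OF h] simple_function_compose1[OF s])
      (auto elim: eventually_mono)
  have neg: "(\<lambda>x. max (- s x) 0 * h x) \<in> X \<and> N (\<lambda>x. max (- s x) 0 * h x) \<le> c * N h"
    using bound \<open>0 \<le> c\<close>
    by (intro mult_simple_nonneg_AE_le[OF h] simple_function_compose1[OF s])
      (auto elim: eventually_mono)
  have "(\<lambda>x. s x * h x) = (\<lambda>x. max (s x) 0 * h x - max (- s x) 0 * h x)"
    by (auto simp: fun_eq_iff max_def algebra_simps)
  then show ?thesis
    using diff_mem[OF pos[THEN conjunct1] neg[THEN conjunct1]]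
      norm_diff_le[OF pos[THEN conjunct1] neg[THEN conjunct1]] pos neg
    by simp
qed

lemma abs_mem: "g \<in> X \<Longrightarrow> (\<lambda>x. \<bar>g x\<bar>) \<in> X"
proof -
  assume g: "g \<in> X"
  from mult_simple_AE_le[OF g simple_function_sgn[OF mem_measurable[OF g]], of 1] show ?thesis
    by (simp add: abs_sgn mult.commute)
qed

lemma sum_indicator_mult_mem:
  fixes n :: nat
  shows "(\<And>i. i < n \<Longrightarrow> A i \<in> Sigma_f M X f) \<Longrightarrow>
    (\<lambda>x. \<Sum>i<n. c i * (f x * indicator (A i) x)) \<in> X"
  by (induction n) (auto simp: Sigma_f_def intro!: add_mem scale_mem zero_mem)

lemma S_fX_subset: "S_fX M X f \<subseteq> X"
proof
  fix g assume "g \<in> S_fX M X f"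
  then obtain n :: nat and c A where g: "g \<in> borel_measurable M" and A: "\<forall>i<n. A i \<in> Sigma_f M X f"
    and "AE x in M. g x = (\<Sum>i<n. c i * (f x * indicator (A i) x))"
    unfolding S_fX_def by blast
  then have "AE x in M. (\<Sum>i<n. c i * (f x * indicator (A i) x)) = g x"
    by (auto elim: eventually_mono)
  with AE_cong[OF sum_indicator_mult_mem g] A show "g \<in> X" by blast
qed

lemma norm_mono_S_fX:
  assumes g: "g \<in> S_fX M X f" and h: "h \<in> S_fX M X f"
    and le: "AE x in M. 0 \<le> g x \<and> g x \<le> h x"
  shows "N g \<le> N h"
proof -
  obtain \<phi> where \<phi>: "simple_function M \<phi>" "AE x in M. g x = \<phi> x * f x"
    using S_fX_obtain_simple_multiplier[OF g] .
  obtain \<psi> where \<psi>: "simple_function M \<psi>" "AE x in M. h x = \<psi> x * f x"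
    using S_fX_obtain_simple_multiplier[OF h] .
  have gX: "g \<in> X" and hX: "h \<in> X" using g h S_fX_subset by blast+
  define t where "t x = max 0 (min 1 (\<phi> x / \<psi> x))" for x
  have t: "simple_function M t"
    unfolding t_def using \<phi>(1) \<psi>(1) by (rule simple_function_compose2)
  have th: "(\<lambda>x. t x * h x) \<in> X \<and> N (\<lambda>x. t x * h x) \<le> 1 * N h"
    by (rule mult_simple_nonneg_le[OF hX t]) (simp_all add: t_def)
  have "AE x in M. t x * h x = g x"
    using le \<phi>(2) \<psi>(2)
  proof eventually_elim
    case (elim x)
    then show ?case
      unfolding t_def using clamp_ratio_mult[of "\<phi> x" "f x" "\<psi> x"] by simp
  qed
  from AE_cong_le[OF th[THEN conjunct1] th[THEN conjunct2] mem_measurable[OF gX] this]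
  show ?thesis by simp
qed

lemma norm_abs_diff_S_fX:
  assumes f: "f \<in> borel_measurable M" and g: "g \<in> S_fX M X f" and h: "h \<in> S_fX M X f"
  shows "N (\<lambda>x. \<bar>g x\<bar> - \<bar>h x\<bar>) \<le> 2 * N (\<lambda>x. g x - h x)"
proof -
  obtain \<phi> where \<phi>: "simple_function M \<phi>" "AE x in M. g x = \<phi> x * f x"
    using S_fX_obtain_simple_multiplier[OF g] .
  obtain \<psi> where \<psi>: "simple_function M \<psi>" "AE x in M. h x = \<psi> x * f x"
    using S_fX_obtain_simple_multiplier[OF h] .
  have gX: "g \<in> X" and hX: "h \<in> X" using g h S_fX_subset by auto
  define r where "r x = (\<bar>\<phi> x\<bar> - \<bar>\<psi> x\<bar>) * sgn (f x) / (\<phi> x - \<psi> x)" for x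
  have r: "simple_function M r"
    using \<phi>(1) \<psi>(1) simple_function_sgn[OF f] unfolding r_def
    by (intro simple_function_div simple_function_mult simple_function_diff)
      (auto intro: simple_function_compose1)
  have "\<And>x. \<bar>r x\<bar> \<le> 1"
    unfolding r_def by (rule abs_ratio_le_1)
  then have rd: "(\<lambda>x. r x * (g x - h x)) \<in> X \<and>
      N (\<lambda>x. r x * (g x - h x)) \<le> 2 * 1 * N (\<lambda>x. g x - h x)"
    by (intro mult_simple_AE_le[OF diff_mem[OF gX hX] r]) auto
  have "AE x in M. r x * (g x - h x) = \<bar>g x\<bar> - \<bar>h x\<bar>"
    using \<phi>(2) \<psi>(2) by eventually_elim (simp only: r_def abs_diff_eq_ratio_mult)
  from AE_cong_le[OF rd[THEN conjunct1] rd[THEN conjunct2] _ this] show ?thesis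
    using gX hX mem_measurable by auto
qed

lemma norm_abs_simple_mult_le:
  assumes s: "simple_function M s" and g: "g \<in> X"
  shows "N (\<lambda>x. \<bar>s x * g x\<bar>) \<le> Linf_norm M s * N (\<lambda>x. \<bar>g x\<bar>)"
proof -
  have "N (\<lambda>x. \<bar>s x\<bar> * \<bar>g x\<bar>) \<le> Linf_norm M s * N (\<lambda>x. \<bar>g x\<bar>)"
    using AE_abs_le_Linf_norm[OF s] Linf_norm_nonneg
    by (intro mult_simple_nonneg_AE_le[OF abs_mem[OF g] simple_function_compose1[OF s],
          THEN conjunct2]) auto
  then show ?thesis by (simp add: abs_mult)
qed

lemma norm_simple_mult_le:
  "simple_function M s \<Longrightarrow> g \<in> X \<Longrightarrow> N (\<lambda>x. s x * g x) \<le> 2 * Linf_norm M s * N g"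
  using mult_simple_AE_le[OF _ _ Linf_norm_nonneg AE_abs_le_Linf_norm] by blast

end

theorem proposition3p4:
  fixes M :: "'a measure" and X :: "('a \<Rightarrow> real) set" and N :: "('a \<Rightarrow> real) \<Rightarrow> real"
  assumes "finite_measure M"
    and "strictly_rectangular_fs M X N"
    and "f \<in> borel_measurable M"
  shows "(\<forall>g\<in>S_fX M X f. \<forall>h\<in>S_fX M X f.
            (AE x in M. 0 \<le> g x \<and> g x \<le> h x) \<longrightarrow> N g \<le> N h)
       \<and> (\<forall>g\<in>S_fX M X f. \<forall>h\<in>S_fX M X f.
            N (\<lambda>x. \<bar>g x\<bar> - \<bar>h x\<bar>) \<le> 4 * N (\<lambda>x. g x - h x))
       \<and> (f \<in> X \<longrightarrow> (\<forall>s g. simple_function M s \<longrightarrow> g \<in> S_fX M X f \<longrightarrow>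
            N (\<lambda>x. \<bar>s x * g x\<bar>) \<le> Linf_norm M s * N (\<lambda>x. \<bar>g x\<bar>) \<and>
            N (\<lambda>x. s x * g x) \<le> 4 * Linf_norm M s * N g))"
proof -
  interpret strictly_rectangular M X N by (rule strictly_rectangular.intro) fact
  have mono: "\<forall>g\<in>S_fX M X f. \<forall>h\<in>S_fX M X f.
      (AE x in M. 0 \<le> g x \<and> g x \<le> h x) \<longrightarrow> N g \<le> N h"
    using norm_mono_S_fX by blast
  have abs_diff: "\<forall>g\<in>S_fX M X f. \<forall>h\<in>S_fX M X f.
      N (\<lambda>x. \<bar>g x\<bar> - \<bar>h x\<bar>) \<le> 4 * N (\<lambda>x. g x - h x)"
  proof (intro ballI)
    fix g h :: "'a \<Rightarrow> real" assume S: "g \<in> S_fX M X f" "h \<in> S_fX M X f"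
    then have "g \<in> X" "h \<in> X" using S_fX_subset by blast+
    then show "N (\<lambda>x. \<bar>g x\<bar> - \<bar>h x\<bar>) \<le> 4 * N (\<lambda>x. g x - h x)"
      using norm_abs_diff_S_fX[OF assms(3) S] norm_nonneg[OF diff_mem] by fastforce
  qed
  have mult: "\<forall>s g. simple_function M s \<longrightarrow> g \<in> S_fX M X f \<longrightarrow>
      N (\<lambda>x. \<bar>s x * g x\<bar>) \<le> Linf_norm M s * N (\<lambda>x. \<bar>g x\<bar>) \<and>
      N (\<lambda>x. s x * g x) \<le> 4 * Linf_norm M s * N g"
  proof (intro allI impI conjI)
    fix s g :: "'a \<Rightarrow> real" assume s: "simple_function M s" and "g \<in> S_fX M X f"
    then have g: "g \<in> X" using S_fX_subset by blast
    show "N (\<lambda>x. \<bar>s x * g x\<bar>) \<le> Linf_norm M s * N (\<lambda>x. \<bar>g x\<bar>)"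
      by (rule norm_abs_simple_mult_le[OF s g])
    show "N (\<lambda>x. s x * g x) \<le> 4 * Linf_norm M s * N g"
      using norm_simple_mult_le[OF s g] mult_nonneg_nonneg[OF Linf_norm_nonneg[of M s] norm_nonneg[OF g]]
      unfolding mult.assoc by linarith
  qed
  from mono abs_diff mult show ?thesis by blast
qed

end
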